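(* Let $a,b,c,p\in\mathbb{C}$ with $-c\notin\mathbb{N}\cup\{0\}$. Suppose that \[ e^{-p\arctan z}F(a,b;c;z)=\sum_{n=0}^\infty u_nz^n,\qquad |z|<1. \] Then $u_0=1$, $u_1=\frac{ab}{c}-p$, $u_2=-\frac{abp}{c}+\frac{a(a+1)b(b+1)}{2c(c+1)}+\frac{p^2}{2}$, $u_3=\frac{abp^2}{2c}-\frac{a(a+1)b(b+1)p}{2c(c+1)}+\frac{a(a+1)(a+2)b(b+1)(b+2)}{6c(c+1)(c+2)}+\frac13\left(p-\frac{p^3}{2}\right)$, \[ u_4=\frac1{24}\left(\frac{6a(a+1)b(b+1)p^2}{c(c+1)}-\frac{4ab(p^2-2)p}{c}-\frac{4(a)_3(b)_3p}{(c)_3}+\frac{(a)_4(b)_4}{(c)_4}+p^4-8p^2\right), \] and for all integers $n\ge4$, \[ u_{n+1}=\beta_0(n)u_n+\beta_1(n)u_{n-1}+\beta_2(n)u_{n-2}+\beta_3(n)u_{n-3}+\beta_4(n)u_{n-4}, \] where \[ \begin{aligned} \beta_0(n)&=\frac{(a+n)(b+n)-p(c+2n)}{(n+1)(c+n)},\qquad \beta_1(n)=\frac{p(a+b+2n-1)-2(n-1)(c+n-2)-p^2}{(n+1)(c+n)},\\ \beta_2(n)&=\frac{2(a+n-2)(b+n-2)-p(c+2n-6)+p^2}{(n+1)(c+n)},\qquad \beta_3(n)=\frac{p(a+b+2n-7)-(n-3)(c+n-4)}{(n+1)(c+n)},\\ \beta_4(n)&=\frac{(a+n-4)(b+n-4)}{(n+1)(c+n)}.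 \end{aligned} \]
   Context: $\arctan$ denotes the principal branch, analytic on the unit disc with $\arctan0=0$. For $a\in\mathbb{C}$, $(a)_n=a(a+1)\cdots(a+n-1)$ denotes the Pochhammer symbol, with $(a)_0=1$. For $a,b,c\in\mathbb{C}$ with $-c\notin\mathbb{N}\cup\{0\}$, the Gaussian hypergeometric function is $F(a,b;c;z)=\sum_{n=0}^\infty \frac{(a)_n(b)_n}{(c)_n\,n!}z^n$, $|z|<1$. *)

theory Defs
  imports "HOL-Analysis.Analysis"
begin

definition hypgeom :: "complex \<Rightarrow> complex \<Rightarrow> complex \<Rightarrow> complex \<Rightarrow> complex" where
  "hypgeom a b c z =
     (\<Sum>n. pochhammer a n * pochhammer b n / (pochhammer c n * fact n) * z ^ n)"

end

theory Submission
  imports Defs "HOL-Complex_Analysis.Complex_Analysis"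
begin

(* Write the product as G = E H with E(z) = exp (-p arctan z) and H(z) = F(a,b;c;z). Then
   (1 + z^2) E' = -p E, and H solves the hypergeometric equation z (1 - z) H'' + (c - (a+b+1) z) H' = a b H.
   Eliminating E and H gives a second-order equation for G whose coefficients are polynomials of
   degree at most 6; comparing the coefficients of z^n in it yields the five-term recurrence.
   The first five coefficients come from the Cauchy product of those of E, obtained from its
   differential equation, with those of H. *)

lemma add_of_nat_neq_0:
  fixes c :: "'a::ring_1"
  assumes "\<And>m. c \<noteq> - of_nat m"
  shows "c + of_nat n \<noteq> 0"
  using assms[of n] by (auto simp: add_eq_0_iff)

lemma has_fps_expansion_if_sums:
  fixes f :: "complex \<Rightarrow> complex"
  assumes "r > 0" and "\<And>z. norm z < r \<Longrightarrow> (\<lambda>n. u n * z ^ n) sums f z"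
  shows "f has_fps_expansion Abs_fps u"
proof (rule has_fps_expansionI)
  have "eventually (\<lambda>z. z \<in> ball 0 r) (nhds 0)"
    using assms(1) by (intro eventually_nhds_in_open) auto
  then show "eventually (\<lambda>z. (\<lambda>n. fps_nth (Abs_fps u) n * z ^ n) sums f z) (nhds 0)"
    by eventually_elim (simp add: assms(2))
qed

definition hypgeom_coeff :: "'a::field_char_0 \<Rightarrow> 'a \<Rightarrow> 'a \<Rightarrow> nat \<Rightarrow> 'a" where
  "hypgeom_coeff a b c n = pochhammer a n * pochhammer b n / (pochhammer c n * fact n)"

(* Valid for every c: if c + n = 0, both sides are 0 since pochhammer c (Suc n) = 0 and x / 0 = 0.
   This is why summability below needs no hypothesis on c. *)
lemma hypgeom_coeff_Suc:
  "hypgeom_coeff a b c (Suc n)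
     = (a + of_nat n) * (b + of_nat n) / ((c + of_nat n) * (of_nat n + 1)) * hypgeom_coeff a b c n"
  unfolding hypgeom_coeff_def pochhammer_Suc fact_Suc of_nat_Suc
  by (simp add: mult_ac add_ac)

lemma tendsto_add_of_nat_ratio:
  fixes a b :: "'a::real_normed_field"
  shows "(\<lambda>n. (a + of_nat n) / (b + of_nat n)) \<longlonglongrightarrow> 1"
proof (rule Lim_transform_eventually)
  have inf: "filterlim (\<lambda>n. b + of_nat n :: 'a) at_infinity sequentially"
    by (intro tendsto_add_filterlim_at_infinity[OF tendsto_const] tendsto_of_nat)
  then have "(\<lambda>n. 1 + (a - b) / (b + of_nat n)) \<longlonglongrightarrow> 1 + 0"
    by (intro tendsto_add tendsto_const tendsto_divide_0[OF tendsto_const])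
  then show "(\<lambda>n. 1 + (a - b) / (b + of_nat n)) \<longlonglongrightarrow> 1"
    by simp
  show "eventually (\<lambda>n. 1 + (a - b) / (b + of_nat n) = (a + of_nat n) / (b + of_nat n)) sequentially"
    using filterlim_at_infinity_imp_eventually_ne[OF inf, of 0]
    by eventually_elim (simp add: field_simps)
qed

lemma summable_hypgeom_series:
  fixes a b c z :: complex
  assumes "norm z < 1"
  shows "summable (\<lambda>n. hypgeom_coeff a b c n * z ^ n)"
proof -
  define q where "q = (1 + norm z) / 2"
  define r where "r n = (a + of_nat n) * (b + of_nat n) / ((c + of_nat n) * (of_nat n + 1))" for n :: nat
  have "(\<lambda>n. (b + of_nat n) / (of_nat n + 1)) \<longlonglongrightarrow> (1::complex)"
    using tendsto_add_of_nat_ratio[of b 1] by (simp add: add.commute)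
  then have "(\<lambda>n. (a + of_nat n) / (c + of_nat n) * ((b + of_nat n) / (of_nat n + 1)) * z)
               \<longlonglongrightarrow> 1 * 1 * z"
    by (intro tendsto_mult tendsto_const tendsto_add_of_nat_ratio)
  moreover have "r n * z = (a + of_nat n) / (c + of_nat n) * ((b + of_nat n) / (of_nat n + 1)) * z" for n
    by (simp add: r_def)
  ultimately have "(\<lambda>n. norm (r n * z)) \<longlonglongrightarrow> norm z"
    by (simp add: tendsto_norm)
  then have "eventually (\<lambda>n. norm (r n * z) < q) sequentially"
    by (rule order_tendstoD) (use assms in \<open>simp add: q_def\<close>)
  then obtain N where N: "\<And>n. n \<ge> N \<Longrightarrow> norm (r n * z) < q"
    unfolding eventually_sequentially by blast
  show ?thesis
  proof (rule summable_ratio_test)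
    show "q < 1" using assms by (simp add: q_def)
  next
    fix n assume "n \<ge> N"
    have "norm (hypgeom_coeff a b c (Suc n) * z ^ Suc n)
            = norm (r n * z) * norm (hypgeom_coeff a b c n * z ^ n)"
      by (simp add: hypgeom_coeff_Suc r_def norm_mult norm_divide mult_ac)
    also have "\<dots> \<le> q * norm (hypgeom_coeff a b c n * z ^ n)"
      using N[OF \<open>n \<ge> N\<close>] by (intro mult_right_mono) auto
    finally show "norm (hypgeom_coeff a b c (Suc n) * z ^ Suc n)
                    \<le> q * norm (hypgeom_coeff a b c n * z ^ n)" .
  qed
qed

definition hypgeom_fps :: "'a::field_char_0 \<Rightarrow> 'a \<Rightarrow> 'a \<Rightarrow> 'a fps" where
  "hypgeom_fps a b c = Abs_fps (hypgeom_coeff a b c)"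

lemma has_fps_expansion_hypgeom: "hypgeom a b c has_fps_expansion hypgeom_fps a b c"
  unfolding hypgeom_fps_def
  by (rule has_fps_expansion_if_sums[of 1])
     (simp_all add: hypgeom_def summable_sums summable_hypgeom_series flip: hypgeom_coeff_def)

lemma hypgeom_fps_ode:
  fixes a b c :: "'a::field_char_0"
  assumes "\<And>m. c \<noteq> - of_nat m"
  defines "H \<equiv> hypgeom_fps a b c"
  shows "fps_X * (1 - fps_X) * fps_deriv (fps_deriv H)
           + (fps_const c - fps_const (a + b + 1) * fps_X) * fps_deriv H = fps_const (a * b) * H"
proof (rule fps_ext)
  fix n
  have "c + of_nat n \<noteq> 0"
    using assms(1) by (rule add_of_nat_neq_0)
  moreover have "(of_nat n + 1 :: 'a) \<noteq> 0"
    using of_nat_neq_0[of n] by (simp add: add.commute)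
  ultimately have rec: "(c + of_nat n) * (of_nat n + 1) * hypgeom_coeff a b c (Suc n)
                          = (a + of_nat n) * (b + of_nat n) * hypgeom_coeff a b c n"
    by (simp add: hypgeom_coeff_Suc)
  show "fps_nth (fps_X * (1 - fps_X) * fps_deriv (fps_deriv H)
          + (fps_const c - fps_const (a + b + 1) * fps_X) * fps_deriv H) n
        = fps_nth (fps_const (a * b) * H) n"
  proof (cases n)
    case 0
    then show ?thesis using rec by (simp add: H_def hypgeom_fps_def algebra_simps)
  next
    case (Suc m)
    then show ?thesis using rec
      by (cases m) (simp_all add: H_def hypgeom_fps_def algebra_simps)
  qed
qed

lemma exp_Arctan_fps_ode:
  fixes q :: complex
  obtains E where "(\<lambda>z. exp (q * Arctan z)) has_fps_expansion E" and "fps_nth E 0 = 1"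
    and "(1 + fps_X ^ 2) * fps_deriv E = fps_const q * E"
proof -
  define f where "f z = exp (q * Arctan z)" for z
  have Im_bound: "\<bar>Im z\<bar> < 1" if "z \<in> ball 0 1" for z
    using that abs_Im_le_cmod[of z] by simp
  have "f holomorphic_on ball 0 1"
    unfolding f_def by (intro holomorphic_intros holomorphic_on_Arctan Im_bound)
  then have E: "f has_fps_expansion fps_expansion f 0"
    by (intro has_fps_expansion_fps_expansion) auto
  have "(1 + z ^ 2) * deriv f z = q * f z" if "z \<in> ball 0 1" for z
  proof -
    have "norm (z ^ 2) < 1"
      using that by (simp add: norm_power power_less_one_iff)
    then have "1 + z ^ 2 \<noteq> 0"
      by (metis add_eq_0_iff norm_minus_cancel norm_one less_irrefl)
    moreover have "(f has_field_derivative f z * (q * inverse (1 + z ^ 2))) (at z)"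
      unfolding f_def using Im_bound[OF that]
      by (auto intro!: derivative_eq_intros has_field_derivative_Arctan)
    ultimately show ?thesis
      by (simp add: DERIV_imp_deriv field_simps)
  qed
  then have ev: "eventually (\<lambda>z. (1 + z ^ 2) * deriv f z = q * f z) (nhds 0)"
    using eventually_nhds_in_open[of "ball 0 1" 0] by (auto elim: eventually_mono)
  have "(\<lambda>z. (1 + z ^ 2) * deriv f z)
          has_fps_expansion (1 + fps_X ^ 2) * fps_deriv (fps_expansion f 0)"
    by (intro fps_expansion_intros E)
  then have "(\<lambda>z. q * f z) has_fps_expansion (1 + fps_X ^ 2) * fps_deriv (fps_expansion f 0)"
    using has_fps_expansion_cong[OF ev refl] by simp
  moreover have "(\<lambda>z. q * f z) has_fps_expansion fps_const q * fps_expansion f 0"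
    by (intro fps_expansion_intros E)
  ultimately have "(1 + fps_X ^ 2) * fps_deriv (fps_expansion f 0) = fps_const q * fps_expansion f 0"
    by (rule fps_expansion_unique_complex)
  moreover have "fps_nth (fps_expansion f 0) 0 = 1"
    by (simp add: fps_expansion_def f_def)
  ultimately show ?thesis
    using that E unfolding f_def by blast
qed

lemma arctan_ode_fps_coeffs:
  fixes E :: "'a::field_char_0 fps"
  assumes "fps_nth E 0 = 1" and "(1 + fps_X ^ 2) * fps_deriv E = fps_const q * E"
  shows "fps_nth E 1 = q" and "fps_nth E 2 = q ^ 2 / 2"
    and "fps_nth E 3 = (q ^ 3 - 2 * q) / 6" and "fps_nth E 4 = (q ^ 4 - 8 * q ^ 2) / 24"
proof -
  have coeff: "fps_nth ((1 + fps_X ^ 2) * fps_deriv E) k = fps_nth (fps_const q * E) k" for k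
    using assms(2) by simp
  have c0: "fps_nth E 1 = q * fps_nth E 0"
    using coeff[of 0] by simp
  have c1: "2 * fps_nth E 2 = q * fps_nth E 1"
    using coeff[of 1] by (simp add: eval_nat_numeral)
  have c2: "3 * fps_nth E 3 + fps_nth E 1 = q * fps_nth E 2"
    using coeff[of 2] by (simp add: eval_nat_numeral algebra_simps)
  have c3: "4 * fps_nth E 4 + 2 * fps_nth E 2 = q * fps_nth E 3"
    using coeff[of 3] by (simp add: eval_nat_numeral algebra_simps)
  show e1: "fps_nth E 1 = q" using c0 assms(1) by simp
  show e2: "fps_nth E 2 = q ^ 2 / 2" using c1 e1 by (simp add: field_simps power2_eq_square)
  show e3: "fps_nth E 3 = (q ^ 3 - 2 * q) / 6"
    using c2[unfolded e1 e2] by (simp add: field_simps eval_nat_numeral)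
  show "fps_nth E 4 = (q ^ 4 - 8 * q ^ 2) / 24"
    using c3[unfolded e2 e3] by (simp add: field_simps eval_nat_numeral)
qed

lemma product_ode_identity:
  fixes Q Q' q W T r E E1 E2 H H1 H2 :: "'a::comm_ring_1"
  assumes "Q * E1 = q * E" and "Q * E2 + Q' * E1 = q * E1" and "W * H2 + T * H1 = r * H"
  shows "W * Q ^ 2 * (E2 * H + 2 * E1 * H1 + E * H2) + (T * Q - 2 * q * W) * Q * (E1 * H + E * H1)
           + (q ^ 2 * W + q * W * Q' - q * T * Q - r * Q ^ 2) * (E * H) = 0"
proof -
  have "W * Q ^ 2 * (E2 * H + 2 * E1 * H1 + E * H2) + (T * Q - 2 * q * W) * Q * (E1 * H + E * H1)
           + (q ^ 2 * W + q * W * Q' - q * T * Q - r * Q ^ 2) * (E * H)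
        = (2 * W * Q * H1 + (T * Q - W * Q' - q * W) * H) * (Q * E1 - q * E)
          + W * Q * H * (Q * E2 + Q' * E1 - q * E1) + Q ^ 2 * E * (W * H2 + T * H1 - r * H)"
    by (simp add: algebra_simps power2_eq_square)
  with assms show ?thesis by simp
qed

lemma fps_product_ode:
  fixes E H Q W T :: "'a::comm_ring_1 fps"
  assumes E: "Q * fps_deriv E = fps_const q * E"
    and H: "W * fps_deriv (fps_deriv H) + T * fps_deriv H = fps_const r * H"
  shows "W * Q ^ 2 * fps_deriv (fps_deriv (E * H)) + (T * Q - 2 * fps_const q * W) * Q * fps_deriv (E * H)
           + (fps_const q ^ 2 * W + fps_const q * W * fps_deriv Q - fps_const q * T * Q
              - fps_const r * Q ^ 2) * (E * H)
         = 0"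
proof -
  have "fps_deriv (Q * fps_deriv E) = fps_deriv (fps_const q * E)"
    using E by simp
  then have E': "Q * fps_deriv (fps_deriv E) + fps_deriv Q * fps_deriv E = fps_const q * fps_deriv E"
    by (simp add: fps_deriv_mult)
  have d1: "fps_deriv (E * H) = fps_deriv E * H + E * fps_deriv H"
    by (simp add: fps_deriv_mult add.commute)
  have d2: "fps_deriv (fps_deriv (E * H))
              = fps_deriv (fps_deriv E) * H + 2 * fps_deriv E * fps_deriv H + E * fps_deriv (fps_deriv H)"
    by (simp add: fps_deriv_mult algebra_simps mult_2)
  show ?thesis
    by (subst d2, subst d1) (rule product_ode_identity[OF E E' H])
qed

definition arctan_hypgeom_operator :: "'a::comm_ring_1 \<Rightarrow> 'a \<Rightarrow> 'a \<Rightarrow> 'a \<Rightarrow> 'a fps \<Rightarrow> 'a fps" where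
  "arctan_hypgeom_operator a b c p G =
     (let Q = 1 + fps_X ^ 2; W = fps_X * (1 - fps_X); T = fps_const c - fps_const (a + b + 1) * fps_X
      in W * Q ^ 2 * fps_deriv (fps_deriv G) + (T * Q + 2 * fps_const p * W) * Q * fps_deriv G
         + (fps_const p * T * Q + fps_const p * W * (fps_const p - 2 * fps_X) - fps_const (a * b) * Q ^ 2) * G)"

lemma arctan_hypgeom_operator_product:
  fixes E H :: "'a::comm_ring_1 fps"
  assumes E: "(1 + fps_X ^ 2) * fps_deriv E = fps_const (- p) * E"
    and H: "fps_X * (1 - fps_X) * fps_deriv (fps_deriv H)
              + (fps_const c - fps_const (a + b + 1) * fps_X) * fps_deriv H = fps_const (a * b) * H"
  shows "arctan_hypgeom_operator a b c p (E * H) = 0"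
proof -
  define Q :: "'a fps" where "Q = 1 + fps_X ^ 2"
  define W :: "'a fps" where "W = fps_X * (1 - fps_X)"
  define T where "T = fps_const c - fps_const (a + b + 1) * fps_X"
  have "fps_deriv Q = 2 * fps_X"
    by (simp add: Q_def fps_deriv_power)
  then have "arctan_hypgeom_operator a b c p G
               = W * Q ^ 2 * fps_deriv (fps_deriv G) + (T * Q - 2 * fps_const (- p) * W) * Q * fps_deriv G
                 + (fps_const (- p) ^ 2 * W + fps_const (- p) * W * fps_deriv Q - fps_const (- p) * T * Q
                    - fps_const (a * b) * Q ^ 2) * G" for G
    by (simp add: arctan_hypgeom_operator_def Let_def Q_def W_def T_def algebra_simps power2_eq_square
        flip: fps_const_neg)
  then show ?thesis
    using fps_product_ode[OF E H] unfolding Q_def W_def T_def by simp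
qed

lemma arctan_hypgeom_operator_nth:
  fixes G :: "'a::comm_ring_1 fps"
  assumes "n \<ge> 4"
  shows "fps_nth (arctan_hypgeom_operator a b c p G) n
           = (of_nat n + 1) * (c + of_nat n) * fps_nth G (n + 1)
             - ((a + of_nat n) * (b + of_nat n) - p * (c + 2 * of_nat n)) * fps_nth G n
             - (p * (a + b + 2 * of_nat n - 1) - 2 * (of_nat n - 1) * (c + of_nat n - 2) - p ^ 2) * fps_nth G (n - 1)
             - (2 * (a + of_nat n - 2) * (b + of_nat n - 2) - p * (c + 2 * of_nat n - 6) + p ^ 2) * fps_nth G (n - 2)
             - (p * (a + b + 2 * of_nat n - 7) - (of_nat n - 3) * (c + of_nat n - 4)) * fps_nth G (n - 3)
             - (a + of_nat n - 4) * (b + of_nat n - 4) * fps_nth G (n - 4)"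
proof -
  (* z^5 G' and z^6 G'' contribute to the coefficient of z^n only from n = 5 resp. n = 6 on. *)
  have "n = 4 \<or> n = 5 \<or> n = (n - 6) + 6" using assms by arith
  then consider "n = 4" | "n = 5" | m where "n = m + 6"
    by blast
  then show ?thesis
    by cases (simp_all add: arctan_hypgeom_operator_def algebra_simps power2_eq_square
        numeral_fps_const eval_nat_numeral)
qed

lemma arctan_hypgeom_initial_coeffs:
  fixes E :: "'a::field_char_0 fps" and a b c p :: 'a
  assumes c: "\<And>m. c \<noteq> - of_nat m"
    and E0: "fps_nth E 0 = 1" and E: "(1 + fps_X ^ 2) * fps_deriv E = fps_const (- p) * E"
  defines "g \<equiv> fps_nth (E * hypgeom_fps a b c)"
  shows "g 0 = 1"
    and "g 1 = a * b / c - p"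
    and "g 2 = - (a * b * p / c) + a * (a + 1) * b * (b + 1) / (2 * c * (c + 1)) + p ^ 2 / 2"
    and "g 3 = a * b * p ^ 2 / (2 * c) - a * (a + 1) * b * (b + 1) * p / (2 * c * (c + 1))
            + a * (a + 1) * (a + 2) * b * (b + 1) * (b + 2) / (6 * c * (c + 1) * (c + 2))
            + (1 / 3) * (p - p ^ 3 / 2)"
    and "g 4 = (1 / 24) * (6 * a * (a + 1) * b * (b + 1) * p ^ 2 / (c * (c + 1))
            - 4 * a * b * (p ^ 2 - 2) * p / c
            - 4 * pochhammer a 3 * pochhammer b 3 * p / pochhammer c 3
            + pochhammer a 4 * pochhammer b 4 / pochhammer c 4
            + p ^ 4 - 8 * p ^ 2)"
proof -
  from add_of_nat_neq_0[OF c, of 0] add_of_nat_neq_0[OF c, of 1] add_of_nat_neq_0[OF c, of 2]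
  have nz: "c \<noteq> 0" "c + 1 \<noteq> 0" "c + 2 \<noteq> 0" "pochhammer c 3 \<noteq> 0" "pochhammer c 4 \<noteq> 0"
    using c by (simp_all add: pochhammer_eq_0_iff)
  note e = arctan_ode_fps_coeffs[OF E0 E]
  have g: "g k = (\<Sum>i\<le>k. fps_nth E i * hypgeom_coeff a b c (k - i))" for k
    by (simp add: g_def fps_mult_nth hypgeom_fps_def atLeast0AtMost)
  have g_expand:
    "g 1 = fps_nth E 0 * hypgeom_coeff a b c 1 + fps_nth E 1"
    "g 2 = fps_nth E 0 * hypgeom_coeff a b c 2 + fps_nth E 1 * hypgeom_coeff a b c 1 + fps_nth E 2"
    "g 3 = fps_nth E 0 * hypgeom_coeff a b c 3 + fps_nth E 1 * hypgeom_coeff a b c 2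
             + fps_nth E 2 * hypgeom_coeff a b c 1 + fps_nth E 3"
    "g 4 = fps_nth E 0 * hypgeom_coeff a b c 4 + fps_nth E 1 * hypgeom_coeff a b c 3
             + fps_nth E 2 * hypgeom_coeff a b c 2 + fps_nth E 3 * hypgeom_coeff a b c 1 + fps_nth E 4"
    by (simp_all add: g eval_nat_numeral hypgeom_coeff_def)
  have h_poch: "hypgeom_coeff a b c k = pochhammer a k * pochhammer b k / (fact k * pochhammer c k)" for k
    by (simp add: hypgeom_coeff_def mult.commute)
  have h1: "hypgeom_coeff a b c 1 = a * b / c"
    by (simp add: hypgeom_coeff_def)
  have h2: "hypgeom_coeff a b c 2 = a * (a + 1) * b * (b + 1) / (2 * c * (c + 1))"
    by (simp add: hypgeom_coeff_def eval_nat_numeral pochhammer_Suc mult_ac)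
  have h3: "hypgeom_coeff a b c 3 = a * (a + 1) * (a + 2) * b * (b + 1) * (b + 2) / (6 * c * (c + 1) * (c + 2))"
    by (simp add: hypgeom_coeff_def eval_nat_numeral pochhammer_Suc algebra_simps)
  show "g 0 = 1"
    by (simp add: g E0 hypgeom_coeff_def)
  show "g 1 = a * b / c - p"
    unfolding g_expand E0 e h1 by simp
  show "g 2 = - (a * b * p / c) + a * (a + 1) * b * (b + 1) / (2 * c * (c + 1)) + p ^ 2 / 2"
    unfolding g_expand E0 e h1 h2 using nz by (simp add: field_simps)
  show "g 3 = a * b * p ^ 2 / (2 * c) - a * (a + 1) * b * (b + 1) * p / (2 * c * (c + 1))
            + a * (a + 1) * (a + 2) * b * (b + 1) * (b + 2) / (6 * c * (c + 1) * (c + 2))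
            + (1 / 3) * (p - p ^ 3 / 2)"
  proof -
    have t1: "a * b * p ^ 2 / (2 * c) = p ^ 2 / 2 * hypgeom_coeff a b c 1"
      unfolding h1 by simp
    have t2: "a * (a + 1) * b * (b + 1) * p / (2 * c * (c + 1)) = p * hypgeom_coeff a b c 2"
      unfolding h2 by (simp add: mult_ac)
    show ?thesis
      unfolding g_expand E0 e h3 t1 t2 by (simp add: field_simps)
  qed
  show "g 4 = (1 / 24) * (6 * a * (a + 1) * b * (b + 1) * p ^ 2 / (c * (c + 1))
            - 4 * a * b * (p ^ 2 - 2) * p / c
            - 4 * pochhammer a 3 * pochhammer b 3 * p / pochhammer c 3
            + pochhammer a 4 * pochhammer b 4 / pochhammer c 4
            + p ^ 4 - 8 * p ^ 2)"
  proof -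
    have t1: "6 * a * (a + 1) * b * (b + 1) * p ^ 2 / (c * (c + 1)) = 12 * p ^ 2 * hypgeom_coeff a b c 2"
      unfolding h2 using nz by (simp add: divide_simps)
    have t2: "4 * a * b * (p ^ 2 - 2) * p / c = 4 * (p ^ 2 - 2) * p * hypgeom_coeff a b c 1"
      unfolding h1 by simp
    have t3: "4 * pochhammer a 3 * pochhammer b 3 * p / pochhammer c 3 = 24 * p * hypgeom_coeff a b c 3"
      unfolding h_poch using nz by (simp add: field_simps fact_numeral)
    have t4: "pochhammer a 4 * pochhammer b 4 / pochhammer c 4 = 24 * hypgeom_coeff a b c 4"
      unfolding h_poch using nz by (simp add: field_simps fact_numeral)
    show ?thesis
      unfolding g_expand E0 e t1 t2 t3 t4 by (simp add: field_simps power3_eq_cube power2_eq_square)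
  qed
qed

lemma mult_eq_sum5_imp_eq_divide:
  fixes d x :: "'a::field"
  assumes "d \<noteq> 0" and "d * x - a0 * y0 - a1 * y1 - a2 * y2 - a3 * y3 - a4 * y4 = 0"
  shows "x = a0 / d * y0 + a1 / d * y1 + a2 / d * y2 + a3 / d * y3 + a4 / d * y4"
proof -
  have "d * x = a0 * y0 + a1 * y1 + a2 * y2 + a3 * y3 + a4 * y4"
    using assms(2) by (simp add: algebra_simps)
  with assms(1) show ?thesis
    by (simp add: field_simps)
qed

theorem theorem3p7:
  fixes a b c p :: complex and u :: "nat \<Rightarrow> complex"
  assumes hc: "\<And>m::nat. c \<noteq> - of_nat m"
    and hu: "\<And>z::complex. norm z < 1 \<Longrightarrow>
               (\<lambda>n. u n * z ^ n) sums (exp (- p * Arctan z) * hypgeom a b c z)"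
  defines "\<beta>0 \<equiv> \<lambda>n::nat. ((a + of_nat n) * (b + of_nat n) - p * (c + 2 * of_nat n))
                              / ((of_nat n + 1) * (c + of_nat n))"
    and "\<beta>1 \<equiv> \<lambda>n::nat. (p * (a + b + 2 * of_nat n - 1) - 2 * (of_nat n - 1) * (c + of_nat n - 2) - p ^ 2)
                              / ((of_nat n + 1) * (c + of_nat n))"
    and "\<beta>2 \<equiv> \<lambda>n::nat. (2 * (a + of_nat n - 2) * (b + of_nat n - 2) - p * (c + 2 * of_nat n - 6) + p ^ 2)
                              / ((of_nat n + 1) * (c + of_nat n))"
    and "\<beta>3 \<equiv> \<lambda>n::nat. (p * (a + b + 2 * of_nat n - 7) - (of_nat n - 3) * (c + of_nat n - 4))
                              / ((of_nat n + 1) * (c + of_nat n))"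
    and "\<beta>4 \<equiv> \<lambda>n::nat. ((a + of_nat n - 4) * (b + of_nat n - 4))
                              / ((of_nat n + 1) * (c + of_nat n))"
  shows "u 0 = 1
    \<and> u 1 = a * b / c - p
    \<and> u 2 = - (a * b * p / c) + a * (a + 1) * b * (b + 1) / (2 * c * (c + 1)) + p ^ 2 / 2
    \<and> u 3 = a * b * p ^ 2 / (2 * c) - a * (a + 1) * b * (b + 1) * p / (2 * c * (c + 1))
            + a * (a + 1) * (a + 2) * b * (b + 1) * (b + 2) / (6 * c * (c + 1) * (c + 2))
            + (1 / 3) * (p - p ^ 3 / 2)
    \<and> u 4 = (1 / 24) * (6 * a * (a + 1) * b * (b + 1) * p ^ 2 / (c * (c + 1))
            - 4 * a * b * (p ^ 2 - 2) * p / c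
            - 4 * pochhammer a 3 * pochhammer b 3 * p / pochhammer c 3
            + pochhammer a 4 * pochhammer b 4 / pochhammer c 4
            + p ^ 4 - 8 * p ^ 2)
    \<and> (\<forall>n::nat. n \<ge> 4 \<longrightarrow>
          u (n + 1) = \<beta>0 n * u n + \<beta>1 n * u (n - 1) + \<beta>2 n * u (n - 2)
                      + \<beta>3 n * u (n - 3) + \<beta>4 n * u (n - 4))"
proof -
  obtain E where fE: "(\<lambda>z. exp (- p * Arctan z)) has_fps_expansion E"
    and E0: "fps_nth E 0 = 1" and E: "(1 + fps_X ^ 2) * fps_deriv E = fps_const (- p) * E"
    by (rule exp_Arctan_fps_ode)
  have "(\<lambda>z. exp (- p * Arctan z) * hypgeom a b c z) has_fps_expansion Abs_fps u"
    by (rule has_fps_expansion_if_sums[of 1]) (use hu in auto)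
  then have G: "Abs_fps u = E * hypgeom_fps a b c"
    by (rule fps_expansion_unique_complex[OF _ has_fps_expansion_mult[OF fE has_fps_expansion_hypgeom]])
  then have u: "u = fps_nth (E * hypgeom_fps a b c)"
    by (simp add: fps_eq_iff fun_eq_iff)
  have "u (n + 1) = \<beta>0 n * u n + \<beta>1 n * u (n - 1) + \<beta>2 n * u (n - 2)
                      + \<beta>3 n * u (n - 3) + \<beta>4 n * u (n - 4)"
    if "n \<ge> 4" for n
  proof -
    have "c + of_nat n \<noteq> 0"
      using hc by (rule add_of_nat_neq_0)
    moreover have "of_nat n + 1 \<noteq> (0 :: complex)"
      using of_nat_neq_0[of n] by (simp add: add.commute)
    moreover have "fps_nth (arctan_hypgeom_operator a b c p (Abs_fps u)) n = 0"
      unfolding G by (simp add: arctan_hypgeom_operator_product[OF E hypgeom_fps_ode[OF hc]])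
    ultimately show ?thesis
      unfolding \<beta>0_def \<beta>1_def \<beta>2_def \<beta>3_def \<beta>4_def
      by (intro mult_eq_sum5_imp_eq_divide) (simp_all add: arctan_hypgeom_operator_nth[OF that])
  qed
  then show ?thesis
    using arctan_hypgeom_initial_coeffs[OF hc E0 E, of a b] unfolding u by blast
qed

end
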